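(* Let $\mathbb{0}=\{x\in\omega^\omega : x(n)=0 \text{ for all but finitely many } n\}$. Then every maximal chain of $(\omega^\omega\setminus\mathbb{0},\le^* )$ has size at least $\mathfrak{c}$; consequently $\mathfrak{mc}(\omega^\omega\setminus\mathbb{0},\le^* )=\mathfrak{c}$.
   Context: For $x,y\in\omega^\omega$, $x\le^* y$ means $x(n)\le y(n)$ for all but finitely many $n$. For a poset (or preorder) $(P,\le)$, a chain is a subset whose elements are pairwise comparable, and $\mathfrak{mc}(P)$ is the minimal cardinality of a maximal (with respect to inclusion) chain of $P$. $\mathfrak{c}=2^{\aleph_0}$. *)

theory Defs
  imports Main "HOL-Library.Equipollence"
begin

definition le_star :: "(nat \<Rightarrow> nat) \<Rightarrow> (nat \<Rightarrow> nat) \<Rightarrow> bool" where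
  "le_star x y \<longleftrightarrow> finite {n. \<not> (x n \<le> y n)}"

definition ev_zero :: "(nat \<Rightarrow> nat) set" where
  "ev_zero = {x. finite {n. x n \<noteq> 0}}"

definition is_chain :: "('a \<Rightarrow> 'a \<Rightarrow> bool) \<Rightarrow> 'a set \<Rightarrow> 'a set \<Rightarrow> bool" where
  "is_chain le P C \<longleftrightarrow> C \<subseteq> P \<and> (\<forall>x\<in>C. \<forall>y\<in>C. le x y \<or> le y x)"

definition is_max_chain :: "('a \<Rightarrow> 'a \<Rightarrow> bool) \<Rightarrow> 'a set \<Rightarrow> 'a set \<Rightarrow> bool" where
  "is_max_chain le P C \<longleftrightarrow> is_chain le P C \<and> (\<forall>D. is_chain le P D \<and> C \<subseteq> D \<longrightarrow> D = C)"

end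

theory Submission
  imports Defs "HOL-Library.Infinite_Set" "HOL-Library.Nat_Bijection"
begin

(* A maximal chain C of (omega^omega - 0, <=* ) absorbs every function comparable with all of
   its elements. Since <=* is dense and countable families u_i <=* v_j can always be
   interpolated, C inherits both properties. A dense chain without countable gaps contains a
   binary Cantor scheme of nested intervals whose branches catch pairwise distinct points of C,
   so |C| >= 2^aleph_0. Conversely C is a subset of omega^omega, and a maximal chain exists by
   Zorn's lemma. *)

abbreviation strictly :: "('a \<Rightarrow> 'a \<Rightarrow> bool) \<Rightarrow> 'a \<Rightarrow> 'a \<Rightarrow> bool" where
  "strictly le x y \<equiv> le x y \<and> \<not> le y x"

lemma max_chain_exists: "\<exists>C. is_max_chain le P C"
proof -
  have "\<exists>M\<in>{D. is_chain le P D}. \<forall>X\<in>{D. is_chain le P D}. M \<subseteq> X \<longrightarrow> X = M"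
  proof (rule subset_Zorn')
    fix K assume K: "subset.chain {D. is_chain le P D} K"
    show "\<Union>K \<in> {D. is_chain le P D}"
      unfolding is_chain_def mem_Collect_eq
    proof (intro conjI ballI)
      show "\<Union>K \<subseteq> P" using K by (auto simp: subset_chain_def is_chain_def)
    next
      fix x y assume "x \<in> \<Union>K" "y \<in> \<Union>K"
      then obtain D E where "D \<in> K" "E \<in> K" "x \<in> D" "y \<in> E" by blast
      moreover have "D \<subseteq> E \<or> E \<subseteq> D" "is_chain le P D" "is_chain le P E"
        using K \<open>D \<in> K\<close> \<open>E \<in> K\<close> unfolding subset_chain_def by auto
      ultimately show "le x y \<or> le y x" unfolding is_chain_def by blast
    qed
  qed
  then show ?thesis unfolding is_max_chain_def by blast
qed

lemma max_chain_absorbs: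
  assumes "partial_preordering le" and C: "is_max_chain le P C" and "w \<in> P"
    and "\<forall>u\<in>C. le u w \<or> le w u"
  shows "w \<in> C"
proof -
  have "is_chain le P (insert w C)"
    using assms partial_preordering.refl[OF assms(1)]
    unfolding is_max_chain_def is_chain_def by auto
  with C show ?thesis unfolding is_max_chain_def by blast
qed

(* If w is not itself in C, the witness is an element of C incomparable with w; it then lies
   strictly above (below) everything w lies strictly above (below). *)
lemma max_chain_interpolant:
  assumes pre: "partial_preordering le" and C: "is_max_chain le P C"
    and "A \<subseteq> C" "B \<subseteq> C" "w \<in> P" and "\<forall>x\<in>A. le x w" "\<forall>y\<in>B. le w y"
  shows "\<exists>c\<in>C. (\<forall>x\<in>A. le x c) \<and> (\<forall>y\<in>B. le c y) \<and> (c = w \<or> \<not> le c w \<and> \<not> le w c)"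
proof (cases "\<forall>u\<in>C. le u w \<or> le w u")
  case True
  then have "w \<in> C" using max_chain_absorbs[OF pre C \<open>w \<in> P\<close>] by blast
  with assms show ?thesis by blast
next
  case False
  then obtain u where u: "u \<in> C" "\<not> le u w" "\<not> le w u" by blast
  have "le x u" if "x \<in> A" for x
  proof -
    have "le x u \<or> le u x"
      using C that \<open>A \<subseteq> C\<close> u(1) unfolding is_max_chain_def is_chain_def by blast
    with u(2) that assms(6) show ?thesis using partial_preordering.trans[OF pre] by blast
  qed
  moreover have "le u y" if "y \<in> B" for y
  proof -
    have "le y u \<or> le u y"
      using C that \<open>B \<subseteq> C\<close> u(1) unfolding is_max_chain_def is_chain_def by blast
    with u(3) that assms(7) show ?thesis using partial_preordering.trans[OF pre] by blast
  qed
  ultimately show ?thesis using u by blast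
qed

locale countably_complete_dense_chain = partial_preordering le for le :: "'a \<Rightarrow> 'a \<Rightarrow> bool" +
  fixes C :: "'a set" and a b :: 'a
  assumes dense: "\<lbrakk>l \<in> C; h \<in> C; strictly le l h\<rbrakk> \<Longrightarrow> \<exists>c\<in>C. strictly le l c \<and> strictly le c h"
    and fill: "\<lbrakk>range (u :: nat \<Rightarrow> 'a) \<subseteq> C; range (v :: nat \<Rightarrow> 'a) \<subseteq> C; \<And>i j. le (u i) (v j)\<rbrakk>
      \<Longrightarrow> \<exists>e\<in>C. \<forall>i j. le (u i) e \<and> le e (v j)"
    and a_in: "a \<in> C" and b_in: "b \<in> C" and a_less_b: "strictly le a b"
begin

definition mid :: "'a \<Rightarrow> 'a \<Rightarrow> 'a" where
  "mid l h = (SOME c. c \<in> C \<and> strictly le l c \<and> strictly le c h)"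

lemma mid:
  assumes "l \<in> C" "h \<in> C" "strictly le l h"
  shows "mid l h \<in> C" "strictly le l (mid l h)" "strictly le (mid l h) h"
  using someI_ex[OF dense[OF assms, unfolded Bex_def]] unfolding mid_def by blast+

(* Stage n + 1 keeps the lower or the upper part of the interval at stage n, depending on
   whether n \<in> X, with a nonempty gap between the two parts. *)
primrec nest :: "nat set \<Rightarrow> nat \<Rightarrow> 'a \<times> 'a" where
  "nest X 0 = (a, b)"
| "nest X (Suc n) =
    (let l = fst (nest X n); h = snd (nest X n); m = mid l h
     in if n \<in> X then (mid m h, h) else (l, m))"

abbreviation lo :: "nat set \<Rightarrow> nat \<Rightarrow> 'a" where "lo X n \<equiv> fst (nest X n)"
abbreviation hi :: "nat set \<Rightarrow> nat \<Rightarrow> 'a" where "hi X n \<equiv> snd (nest X n)"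

lemma nest_interval: "lo X n \<in> C \<and> hi X n \<in> C \<and> strictly le (lo X n) (hi X n)"
proof (induction n)
  case 0
  show ?case using a_in b_in a_less_b by simp
next
  case (Suc n)
  let ?m = "mid (lo X n) (hi X n)"
  have m: "?m \<in> C" "strictly le (lo X n) ?m" "strictly le ?m (hi X n)"
    using mid Suc by blast+
  have "mid ?m (hi X n) \<in> C" "strictly le (mid ?m (hi X n)) (hi X n)"
    using mid[OF m(1) _ m(3)] Suc by blast+
  with m Suc show ?case by (simp add: Let_def)
qed

lemma nest_shrinks: "le (lo X n) (lo X (Suc n)) \<and> le (hi X (Suc n)) (hi X n)"
proof -
  let ?m = "mid (lo X n) (hi X n)"
  have m: "?m \<in> C" "strictly le (lo X n) ?m" "strictly le ?m (hi X n)"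
    using mid nest_interval by blast+
  then have "strictly le ?m (mid ?m (hi X n))" using mid(2)[OF m(1) _ m(3)] nest_interval by blast
  with m show ?thesis
    by (simp add: Let_def refl) (meson trans)
qed

lemma nest_mono: "i \<le> k \<Longrightarrow> le (lo X i) (lo X k) \<and> le (hi X k) (hi X i)"
proof (induction k rule: dec_induct)
  case base
  show ?case by (simp add: refl)
next
  case (step k)
  with nest_shrinks[of X k] show ?case by (blast intro: trans)
qed

lemma nest_lo_le_hi: "le (lo X i) (hi X j)"
proof -
  have "le (lo X i) (lo X (max i j))" "le (hi X (max i j)) (hi X j)"
    using nest_mono by simp_all
  with nest_interval[of X "max i j"] show ?thesis by (blast intro: trans)
qed

lemma nest_cong: "(\<And>m. m < n \<Longrightarrow> m \<in> X \<longleftrightarrow> m \<in> Y) \<Longrightarrow> nest X n = nest Y n"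
  by (induction n) (simp_all add: Let_def)

definition point :: "nat set \<Rightarrow> 'a" where
  "point X = (SOME e. e \<in> C \<and> (\<forall>i j. le (lo X i) e \<and> le e (hi X j)))"

lemma point: "point X \<in> C" "le (lo X i) (point X)" "le (point X) (hi X j)"
proof -
  have "\<exists>e\<in>C. \<forall>i j. le (lo X i) e \<and> le e (hi X j)"
    using fill[of "lo X" "hi X"] nest_interval nest_lo_le_hi by blast
  from someI_ex[OF this[unfolded Bex_def]] show "point X \<in> C" "le (lo X i) (point X)"
      "le (point X) (hi X j)"
    unfolding point_def by blast+
qed

lemma point_less:
  assumes "n \<notin> X" "n \<in> Y" and agree: "\<And>m. m < n \<Longrightarrow> m \<in> X \<longleftrightarrow> m \<in> Y"
  shows "strictly le (point X) (point Y)"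
proof -
  let ?l = "lo X n" and ?h = "hi X n"
  let ?m = "mid ?l ?h"
  have m: "?m \<in> C" "strictly le ?m ?h" using mid nest_interval by blast+
  have "strictly le ?m (mid ?m ?h)" using mid(2)[OF m(1) _ m(2)] nest_interval by blast
  moreover have "le (point X) ?m"
    using point(3)[of X "Suc n"] \<open>n \<notin> X\<close> by (simp add: Let_def)
  moreover have "le (mid ?m ?h) (point Y)"
    using point(2)[of Y "Suc n"] \<open>n \<in> Y\<close> nest_cong[of n Y X] agree by (simp add: Let_def)
  ultimately show ?thesis by (meson trans)
qed

lemma inj_point: "inj point"
proof (rule injI, rule ccontr)
  fix X Y assume eq: "point X = point Y" and "X \<noteq> Y"
  then obtain k where "k \<in> X \<longleftrightarrow> k \<notin> Y" by blast
  define n where "n = (LEAST n. n \<in> X \<longleftrightarrow> n \<notin> Y)"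
  have n: "n \<in> X \<longleftrightarrow> n \<notin> Y"
    unfolding n_def by (rule LeastI) fact
  have agree: "m \<in> X \<longleftrightarrow> m \<in> Y" if "m < n" for m
    using not_less_Least[OF that[unfolded n_def]] by blast
  from n agree point_less[of n X Y] point_less[of n Y X] eq show False
    by (cases "n \<in> X") auto
qed

lemma continuum_lepoll: "(UNIV :: nat set set) \<lesssim> C"
  unfolding lepoll_def using inj_point point(1) by blast

end

lemma le_star_refl: "le_star x x"
  by (simp add: le_star_def)

lemma le_star_trans: "le_star x y \<Longrightarrow> le_star y z \<Longrightarrow> le_star x z"
  unfolding le_star_def
  by (rule finite_subset[of _ "{n. \<not> x n \<le> y n} \<union> {n. \<not> y n \<le> z n}"]) auto

interpretation le_star: partial_preordering le_star
  by unfold_locales (fact le_star_refl, fact le_star_trans)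

lemma le_star_if_le: "x \<le> y \<Longrightarrow> le_star x y"
  by (simp add: le_star_def le_fun_def)

lemma le_star_not_ev_zero:
  assumes "le_star x y" "x \<notin> ev_zero"
  shows "y \<notin> ev_zero"
proof -
  have "{n. x n \<noteq> 0} \<subseteq> {n. \<not> x n \<le> y n} \<union> {n. y n \<noteq> 0}" by auto
  with assms show ?thesis unfolding le_star_def ev_zero_def by (auto dest: finite_subset)
qed

lemma le_star_dense:
  assumes "strictly le_star x y"
  obtains w where "strictly le_star x w" "strictly le_star w y"
proof -
  have "infinite {n. x n < y n}" using assms by (simp add: le_star_def not_le)
  then obtain A B where AB: "A \<subseteq> {n. x n < y n}" "B \<subseteq> {n. x n < y n}"
      "infinite A" "infinite B" "A \<inter> B = {}"
    by (rule infinite_split)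
  define w where "w n = (if n \<in> A then y n else x n)" for n
  have "le_star x w" using AB(1) by (intro le_star_if_le) (auto simp: le_fun_def w_def)
  moreover have "\<not> le_star w x"
  proof -
    have "A \<subseteq> {n. \<not> w n \<le> x n}" using AB(1) by (auto simp: w_def)
    with AB(3) show ?thesis unfolding le_star_def by (auto dest: finite_subset)
  qed
  moreover have "le_star w y"
    using assms unfolding le_star_def by (auto simp: w_def elim!: finite_subset[rotated])
  moreover have "\<not> le_star y w"
  proof -
    have "B \<subseteq> {n. \<not> y n \<le> w n}" using AB(2,5) by (auto simp: w_def)
    with AB(4) show ?thesis unfolding le_star_def by (auto dest: finite_subset)
  qed
  ultimately show ?thesis using that by blast
qed

lemma le_star_countable_interpolant:
  fixes u v :: "nat \<Rightarrow> nat \<Rightarrow> nat"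
  assumes uv: "\<And>i j. le_star (u i) (v j)"
  obtains w where "\<And>i. le_star (u i) w" "\<And>j. le_star w (v j)"
proof -
  define bad where "bad n = (\<Union>i\<le>n. \<Union>j\<le>n. {k. \<not> u i k \<le> v j k})" for n
  have finite_bad: "finite (bad n)" for n
    using uv unfolding bad_def le_star_def by auto
  \<comment> \<open>u i enters w only at coordinates k \<ge> i outside bad i, so it is dropped finitely often,
     while every value entering w at k \<notin> bad j is bounded by v j k.\<close>
  define w where "w k = Max (insert 0 ((\<lambda>i. u i k) ` {i. i \<le> k \<and> k \<notin> bad i}))" for k
  have finite_w: "finite (insert 0 ((\<lambda>i. u i k) ` {i. i \<le> k \<and> k \<notin> bad i}))" for k
    by simp
  have "le_star (u i) w" for i
  proof -
    have "u i k \<le> w k" if "i \<le> k" "k \<notin> bad i" for k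
      unfolding w_def using that by (intro Max_ge[OF finite_w]) auto
    then have "{k. \<not> u i k \<le> w k} \<subseteq> {..<i} \<union> bad i" using not_le by blast
    then show ?thesis unfolding le_star_def using finite_bad by (auto dest: finite_subset)
  qed
  moreover have "le_star w (v j)" for j
  proof -
    have "u i k \<le> v j k" if "k \<notin> bad i" "k \<notin> bad j" for i k
      using that unfolding bad_def by (cases "i \<le> j") auto
    then have "w k \<le> v j k" if "k \<notin> bad j" for k
      unfolding w_def using that by (auto simp: Max_le_iff[OF finite_w])
    then have "{k. \<not> w k \<le> v j k} \<subseteq> bad j" by blast
    then show ?thesis unfolding le_star_def using finite_bad by (auto dest: finite_subset)
  qed
  ultimately show ?thesis using that by blast
qed

lemma max_chain_le_star_strict_pair:
  assumes C: "is_max_chain le_star (UNIV - ev_zero) C"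
  obtains x y where "x \<in> C" "y \<in> C" "strictly le_star x y"
proof -
  have "C \<noteq> {}"
  proof
    assume "C = {}"
    moreover have "(\<lambda>_. 1) \<in> UNIV - ev_zero" by (simp add: ev_zero_def)
    ultimately show False
      using max_chain_absorbs[OF le_star.partial_preordering_axioms C] by blast
  qed
  then obtain x where x: "x \<in> C" by blast
  then have "x \<notin> ev_zero" using C unfolding is_max_chain_def is_chain_def by blast
  define y where "y n = Suc (x n)" for n
  have xy: "le_star x y" "\<not> le_star y x" by (auto simp: le_star_def y_def)
  then have "y \<in> UNIV - ev_zero" using le_star_not_ev_zero \<open>x \<notin> ev_zero\<close> by blast
  from max_chain_interpolant[OF le_star.partial_preordering_axioms C, of "{x}" "{}", OF _ _ this]
  obtain c where "c \<in> C" "le_star x c" "c = y \<or> \<not> le_star c y \<and> \<not> le_star y c"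
    using x xy by auto
  with xy have "strictly le_star x c" using le_star_trans by blast
  with x \<open>c \<in> C\<close> show ?thesis using that by blast
qed

lemma max_chain_le_star_dense:
  assumes C: "is_max_chain le_star (UNIV - ev_zero) C"
    and "x \<in> C" "y \<in> C" "strictly le_star x y"
  shows "\<exists>c\<in>C. strictly le_star x c \<and> strictly le_star c y"
proof -
  obtain w where w: "strictly le_star x w" "strictly le_star w y"
    using le_star_dense \<open>strictly le_star x y\<close> by blast
  have "x \<notin> ev_zero" using C \<open>x \<in> C\<close> unfolding is_max_chain_def is_chain_def by blast
  then have "w \<in> UNIV - ev_zero" using le_star_not_ev_zero w by blast
  from max_chain_interpolant[OF le_star.partial_preordering_axioms C, of "{x}" "{y}", OF _ _ this]
  obtain c where "c \<in> C" "le_star x c" "le_star c y" "c = w \<or> \<not> le_star c w \<and> \<not> le_star w c"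
    using assms w by auto
  with w show ?thesis using le_star_trans by blast
qed

lemma max_chain_le_star_fill:
  fixes u v :: "nat \<Rightarrow> nat \<Rightarrow> nat"
  assumes C: "is_max_chain le_star (UNIV - ev_zero) C"
    and "range u \<subseteq> C" "range v \<subseteq> C" "\<And>i j. le_star (u i) (v j)"
  shows "\<exists>e\<in>C. \<forall>i j. le_star (u i) e \<and> le_star e (v j)"
proof -
  obtain w where w: "\<And>i. le_star (u i) w" "\<And>j. le_star w (v j)"
    using le_star_countable_interpolant assms(4) by blast
  have "u 0 \<notin> ev_zero" using C \<open>range u \<subseteq> C\<close> unfolding is_max_chain_def is_chain_def by blast
  then have "w \<in> UNIV - ev_zero" using le_star_not_ev_zero w(1) by blast
  from max_chain_interpolant[OF le_star.partial_preordering_axioms C assms(2,3) this] w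
  show ?thesis by blast
qed

lemma max_chain_le_star_continuum_lepoll:
  assumes C: "is_max_chain le_star (UNIV - ev_zero) C"
  shows "(UNIV :: nat set set) \<lesssim> C"
proof -
  obtain x y where xy: "x \<in> C" "y \<in> C" "strictly le_star x y"
    using max_chain_le_star_strict_pair[OF C] .
  interpret countably_complete_dense_chain le_star C x y
    using xy max_chain_le_star_dense[OF C] max_chain_le_star_fill[OF C] by unfold_locales blast+
  show ?thesis by (fact continuum_lepoll)
qed

lemma nat_fun_lepoll_nat_set: "(UNIV :: (nat \<Rightarrow> nat) set) \<lesssim> (UNIV :: nat set set)"
proof -
  have "inj (\<lambda>f. range (\<lambda>n. prod_encode (n, f n)))"
  proof (rule injI, rule ext)
    fix f g :: "nat \<Rightarrow> nat" and n
    assume "range (\<lambda>n. prod_encode (n, f n)) = range (\<lambda>n. prod_encode (n, g n))"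
    then have "prod_encode (n, f n) \<in> range (\<lambda>n. prod_encode (n, g n))" by blast
    then show "f n = g n" by auto
  qed
  then show ?thesis unfolding lepoll_def by blast
qed

theorem mainTheorem2:
  shows "(\<forall>C. is_max_chain le_star (UNIV - ev_zero) C \<longrightarrow> (UNIV :: nat set set) \<lesssim> C)
       \<and> (\<exists>C. is_max_chain le_star (UNIV - ev_zero) C \<and> C \<approx> (UNIV :: nat set set))"
proof -
  obtain C where C: "is_max_chain le_star (UNIV - ev_zero) C"
    using max_chain_exists by blast
  have "C \<lesssim> (UNIV :: (nat \<Rightarrow> nat) set)" by (rule subset_imp_lepoll) simp
  then have "C \<lesssim> (UNIV :: nat set set)" using nat_fun_lepoll_nat_set by (rule lepoll_trans)
  with max_chain_le_star_continuum_lepoll[OF C] have "C \<approx> (UNIV :: nat set set)"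
    by (rule lepoll_antisym[rotated])
  with C max_chain_le_star_continuum_lepoll show ?thesis by blast
qed

end
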